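(* A subspace $\mathcal{U}$ of $\mathbb{R}^n$ is not realizable if and only if there is a diagonal $n\times n$ matrix $D$ with $\operatorname{tr}(D)>0$ and $v^TDv\le 0$ for all $v\in\mathcal{U}^\perp$.
   Context: A correlation matrix is a positive semidefinite matrix with all diagonal entries equal to $1$. A subspace $\mathcal{U}\subseteq\mathbb{R}^n$ is realizable if there is an $n\times n$ correlation matrix whose nullspace contains $\mathcal{U}$. *)

theory Defs
  imports "HOL-Analysis.Analysis"
begin

definition psd_matrix :: "real^'n^'n \<Rightarrow> bool" where
  "psd_matrix A \<longleftrightarrow> transpose A = A \<and> (\<forall>x. 0 \<le> x \<bullet> (A *v x))"

definition correlation_matrix :: "real^'n^'n \<Rightarrow> bool" where
  "correlation_matrix A \<longleftrightarrow> psd_matrix A \<and> (\<forall>i. A $ i $ i = 1)"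

definition null_space :: "real^'n^'n \<Rightarrow> (real^'n) set" where
  "null_space A = {x. A *v x = 0}"

definition realizable :: "(real^'n) set \<Rightarrow> bool" where
  "realizable U \<longleftrightarrow> (\<exists>C::real^'n^'n. correlation_matrix C \<and> U \<subseteq> null_space C)"

definition diagonal_matrix :: "real^'n^'n \<Rightarrow> bool" where
  "diagonal_matrix D \<longleftrightarrow> (\<forall>i j. i \<noteq> j \<longrightarrow> D $ i $ j = 0)"

end

theory Submission
  imports Defs
begin

text \<open>A correlation matrix with \<open>U\<close> in its nullspace is a PSD matrix with unit diagonal whose
  columns lie in \<open>U\<^sup>\<bottom>\<close>, i.e. a sum \<open>\<Sum> u\<^sub>g v\<^sub>g v\<^sub>g\<^sup>T\<close> with \<open>u\<^sub>g \<ge> 0\<close>, \<open>v\<^sub>g \<in> U\<^sup>\<bottom>\<close>. So \<open>U\<close> is realizable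
  iff a positive constant vector lies in the convex hull of the entrywise squares of unit vectors
  of \<open>U\<^sup>\<bottom>\<close>. If it does not, a hyperplane \<open>a \<bullet> x = b\<close> separates this compact hull from the
  closed ray of nonnegative constant vectors, and \<open>D = diag(a - b)\<close> is the certificate. Conversely,
  a certificate \<open>D\<close> gives \<open>tr(DC) \<le> 0 < tr D\<close> for any such \<open>C\<close>; this is proved without a spectral
  decomposition by repeatedly splitting off the rank-one term \<open>c c\<^sup>T / C\<^sub>k\<^sub>k\<close> of a pivot column \<open>c\<close>
  (a Schur complement step), each of which contributes \<open>c\<^sup>T D c / C\<^sub>k\<^sub>k \<le> 0\<close>.\<close>

lemma inner_matrix_vector_eq_double_sum:
  fixes A :: "real^'m^'n"
  shows "x \<bullet> (A *v y) = (\<Sum>i\<in>UNIV. \<Sum>j\<in>UNIV. x$i * A$i$j * y$j)"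
  by (simp add: inner_vec_def matrix_vector_mult_def sum_distrib_left mult.assoc)

lemma diagonal_matrix_quadratic_form:
  fixes D :: "real^'n^'n"
  assumes "diagonal_matrix D"
  shows "x \<bullet> (D *v x) = (\<Sum>i\<in>UNIV. D$i$i * (x$i)^2)"
proof -
  have row: "(\<Sum>j\<in>UNIV. x$i * D$i$j * x$j) = x$i * D$i$i * x$i" for i
  proof -
    have "(\<Sum>j\<in>UNIV-{i}. x$i * D$i$j * x$j) = 0"
      using assms unfolding diagonal_matrix_def by (intro sum.neutral) auto
    then show ?thesis by (simp add: sum.remove[where x=i])
  qed
  show ?thesis
    unfolding inner_matrix_vector_eq_double_sum row by (simp add: power2_eq_square mult_ac)
qed

lemma transpose_eq_self_iff:
  fixes C :: "real^'n^'n"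
  shows "transpose C = C \<longleftrightarrow> (\<forall>i j. C$i$j = C$j$i)"
  by (auto simp: transpose_def vec_eq_iff)

lemma symmetric_matrix_inner_commute:
  fixes C :: "real^'n^'n"
  assumes "transpose C = C"
  shows "x \<bullet> (C *v y) = y \<bullet> (C *v x)"
  by (metis assms dot_lmul_matrix inner_commute vector_transpose_matrix)

lemma inner_basis_matrix_basis:
  fixes C :: "real^'n^'n"
  shows "axis i 1 \<bullet> (C *v axis j 1) = C$i$j"
  by (simp add: matrix_vector_mult_basis inner_axis' column_def)

lemma symmetric_quadratic_form_add_scaleR:
  fixes C :: "real^'n^'n"
  assumes "transpose C = C"
  shows "(x + t *\<^sub>R y) \<bullet> (C *v (x + t *\<^sub>R y))
    = x \<bullet> (C *v x) + 2 * t * (x \<bullet> (C *v y)) + t^2 * (y \<bullet> (C *v y))"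
  using symmetric_matrix_inner_commute[OF assms, of y x]
  by (simp add: matrix_vector_right_distrib matrix_vector_mult_scaleR inner_add_left
      inner_add_right algebra_simps power2_eq_square)

lemma psd_matrix_diagonal_nonneg:
  assumes "psd_matrix C"
  shows "0 \<le> C$i$i"
  using assms unfolding psd_matrix_def by (metis inner_basis_matrix_basis)

lemma psd_matrix_zero_diagonal_imp_zero:
  fixes C :: "real^'n^'n"
  assumes "psd_matrix C" "C$i$i = 0"
  shows "C$i$k = 0"
proof (rule ccontr)
  assume "C$i$k \<noteq> 0"
  have sym: "transpose C = C" and psd: "\<And>x. 0 \<le> x \<bullet> (C *v x)"
    using assms(1) by (auto simp: psd_matrix_def)
  then have cki: "C$k$i \<noteq> 0"
    using \<open>C$i$k \<noteq> 0\<close> transpose_eq_self_iff by metis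
  \<comment> \<open>moving from \<open>e\<^sub>k\<close> along \<open>e\<^sub>i\<close> changes the form linearly, since \<open>C\<^sub>i\<^sub>i = 0\<close>\<close>
  define t where "t = - (C$k$k + 1) / (2 * C$k$i)"
  have "0 \<le> (axis k 1 + t *\<^sub>R axis i 1) \<bullet> (C *v (axis k 1 + t *\<^sub>R axis i 1))"
    by (rule psd)
  also have "\<dots> = C$k$k + 2 * t * C$k$i"
    using assms(2) by (simp add: symmetric_quadratic_form_add_scaleR[OF sym] inner_basis_matrix_basis)
  also have "\<dots> = -1"
    using cki unfolding t_def by (simp add: field_simps)
  finally show False by simp
qed

lemma matrix_minus_rank_one_mult:
  fixes A :: "real^'n^'n"
  shows "(\<chi> i j. A$i$j - c$i * d$j / a) *v x = A *v x - ((d \<bullet> x) / a) *\<^sub>R c"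
  by (simp add: vec_eq_iff matrix_vector_mult_def inner_vec_def sum_subtractf
      sum_distrib_left sum_divide_distrib algebra_simps)

lemma psd_matrix_schur_deflation:
  fixes C :: "real^'n^'n"
  assumes "psd_matrix C" "0 < C$k$k"
  shows "psd_matrix (\<chi> i j. C$i$j - C$i$k * C$j$k / C$k$k)"
  unfolding psd_matrix_def
proof
  have sym: "transpose C = C" and psd: "\<And>x. 0 \<le> x \<bullet> (C *v x)"
    using assms(1) by (auto simp: psd_matrix_def)
  then have "\<And>i j. C$i$j = C$j$i"
    using transpose_eq_self_iff by metis
  then show "transpose (\<chi> i j. C$i$j - C$i$k * C$j$k / C$k$k) = (\<chi> i j. C$i$j - C$i$k * C$j$k / C$k$k)"
    unfolding transpose_eq_self_iff by (simp add: mult.commute)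
  define c where "c = column k C"
  have c_col: "x \<bullet> (C *v axis k 1) = c \<bullet> x" for x
    by (simp add: c_def matrix_vector_mult_basis inner_commute)
  have c_nth: "c$i = C$i$k" for i
    by (simp add: c_def column_def)
  show "\<forall>x. 0 \<le> x \<bullet> ((\<chi> i j. C$i$j - C$i$k * C$j$k / C$k$k) *v x)"
  proof
    fix x
    let ?t = "- (c \<bullet> x) / C$k$k"
    have "0 \<le> (x + ?t *\<^sub>R axis k 1) \<bullet> (C *v (x + ?t *\<^sub>R axis k 1))"
      by (rule psd)
    also have "\<dots> = x \<bullet> (C *v x) + 2 * ?t * (x \<bullet> (C *v axis k 1)) + ?t^2 * (axis k 1 \<bullet> (C *v axis k 1))"
      by (rule symmetric_quadratic_form_add_scaleR[OF sym])
    also have "\<dots> = x \<bullet> (C *v x) - (c \<bullet> x)^2 / C$k$k"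
      using assms(2) by (simp add: c_col inner_basis_matrix_basis inner_axis c_nth power2_eq_square field_simps)
    also have "\<dots> = x \<bullet> ((\<chi> i j. C$i$j - c$i * c$j / C$k$k) *v x)"
      by (simp add: matrix_minus_rank_one_mult inner_diff_right power2_eq_square inner_commute)
    finally show "0 \<le> x \<bullet> ((\<chi> i j. C$i$j - C$i$k * C$j$k / C$k$k) *v x)"
      by (simp add: c_nth)
  qed
qed

lemma diagonal_trace_product_nonpos:
  fixes W :: "(real^'n) set" and D C :: "real^'n^'n"
  assumes W: "subspace W" and D: "diagonal_matrix D" and neg: "\<forall>w\<in>W. w \<bullet> (D *v w) \<le> 0"
  shows "psd_matrix C \<Longrightarrow> (\<forall>x. C *v x \<in> W) \<Longrightarrow> (\<Sum>i\<in>UNIV. D$i$i * C$i$i) \<le> 0"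
proof (induction "card {i. C$i$i \<noteq> 0}" arbitrary: C rule: less_induct)
  case less
  show ?case
  proof (cases "\<exists>k. C$k$k \<noteq> 0")
    case False
    then show ?thesis by simp
  next
    case True
    then obtain k where "C$k$k \<noteq> 0" by blast
    with psd_matrix_diagonal_nonneg[OF less.prems(1)] have a: "0 < C$k$k"
      by (simp add: order_less_le)
    define c where "c = column k C"
    have c_nth: "c$i = C$i$k" for i
      by (simp add: c_def column_def)
    have c_W: "c \<in> W"
      using less.prems(2) by (metis c_def matrix_vector_mult_basis)
    define C' where "C' = (\<chi> i j. C$i$j - c$i * c$j / C$k$k)"
    have psd': "psd_matrix C'"
      using psd_matrix_schur_deflation[OF less.prems(1) a] by (simp add: C'_def c_nth)
    have range': "\<forall>x. C' *v x \<in> W"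
      using less.prems(2) c_W W by (simp add: C'_def matrix_minus_rank_one_mult subspace_diff subspace_scale)
    have "{i. C'$i$i \<noteq> 0} \<subseteq> {i. C$i$i \<noteq> 0} - {k}"
      using a psd_matrix_zero_diagonal_imp_zero[OF less.prems(1)] by (auto simp: C'_def c_nth)
    then have "card {i. C'$i$i \<noteq> 0} \<le> card ({i. C$i$i \<noteq> 0} - {k})"
      by (intro card_mono) simp_all
    also have "\<dots> < card {i. C$i$i \<noteq> 0}"
      using \<open>C$k$k \<noteq> 0\<close> by (intro card_Diff1_less) auto
    finally have IH: "(\<Sum>i\<in>UNIV. D$i$i * C'$i$i) \<le> 0"
      using less.hyps psd' range' by blast
    have cDc: "(\<Sum>i\<in>UNIV. D$i$i * (c$i)^2) \<le> 0"
      using neg c_W diagonal_matrix_quadratic_form[OF D, of c] by metis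
    have "(\<Sum>i\<in>UNIV. D$i$i * C$i$i)
        = (\<Sum>i\<in>UNIV. D$i$i * C'$i$i) + (\<Sum>i\<in>UNIV. D$i$i * (c$i)^2) / C$k$k"
      by (simp add: C'_def sum_divide_distrib sum.distrib[symmetric] algebra_simps power2_eq_square)
    also have "\<dots> \<le> 0"
      using IH cDc a by (simp add: add_nonpos_nonpos divide_nonpos_pos)
    finally show ?thesis .
  qed
qed

lemma range_subset_orthogonal_comp_null_space:
  fixes C :: "real^'n^'n"
  assumes "transpose C = C" "U \<subseteq> null_space C"
  shows "C *v x \<in> orthogonal_comp U"
  using assms symmetric_matrix_inner_commute[OF assms(1), of _ x]
  by (auto simp: orthogonal_comp_def orthogonal_def null_space_def)

lemma not_realizable_if_diagonal_certificate:
  fixes U :: "(real^'n) set" and D :: "real^'n^'n"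
  assumes "diagonal_matrix D" "trace D > 0" "\<forall>v \<in> orthogonal_comp U. v \<bullet> (D *v v) \<le> 0"
  shows "\<not> realizable U"
proof
  assume "realizable U"
  then obtain C :: "real^'n^'n" where C: "correlation_matrix C" "U \<subseteq> null_space C"
    unfolding realizable_def by blast
  then have psd: "psd_matrix C" and diag: "\<And>i. C$i$i = 1"
    by (auto simp: correlation_matrix_def)
  have "\<forall>x. C *v x \<in> orthogonal_comp U"
    using psd C(2) range_subset_orthogonal_comp_null_space by (auto simp: psd_matrix_def)
  then have "(\<Sum>i\<in>UNIV. D$i$i * C$i$i) \<le> 0"
    using diagonal_trace_product_nonpos[OF subspace_orthogonal_comp assms(1,3) psd] by blast
  with assms(2) show False
    by (simp add: diag trace_def)
qed

definition entrywise_square :: "real^'n \<Rightarrow> real^'n" where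
  "entrywise_square v = (\<chi> i. (v$i)^2)"

lemma sum_power2_components: "(\<Sum>i\<in>UNIV. (v$i)^2) = (norm v)^2" for v :: "real^'n"
  unfolding power2_norm_eq_inner inner_vec_def by (simp add: power2_eq_square)

lemma entrywise_square_scaleR: "entrywise_square (c *\<^sub>R v) = c^2 *\<^sub>R entrywise_square v"
  by (simp add: entrywise_square_def vec_eq_iff power_mult_distrib)

lemma weighted_gram_matrix_mult:
  fixes v :: "'a \<Rightarrow> real^'n"
  shows "(\<chi> i j. \<Sum>g\<in>F. u g * v g$i * v g$j) *v x = (\<Sum>g\<in>F. (u g * (v g \<bullet> x)) *\<^sub>R v g)"
  by (auto simp: vec_eq_iff matrix_vector_mult_def inner_vec_def sum_distrib_left
      sum_distrib_right mult_ac intro: sum.swap)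

lemma realizable_if_weighted_squares_one:
  fixes U :: "(real^'n) set" and v :: "'a \<Rightarrow> real^'n"
  assumes "finite F" and v: "\<forall>g\<in>F. v g \<in> orthogonal_comp U" and u: "\<forall>g\<in>F. 0 \<le> u g"
    and one: "\<forall>i. (\<Sum>g\<in>F. u g * (v g$i)^2) = 1"
  shows "realizable U"
proof -
  define C :: "real^'n^'n" where "C = (\<chi> i j. \<Sum>g\<in>F. u g * v g$i * v g$j)"
  have form: "x \<bullet> (C *v x) = (\<Sum>g\<in>F. u g * (v g \<bullet> x)^2)" for x
    unfolding C_def weighted_gram_matrix_mult
    by (simp add: inner_sum_right inner_commute power2_eq_square mult_ac)
  have "correlation_matrix C"
    unfolding correlation_matrix_def psd_matrix_def
  proof (intro conjI allI)
    show "transpose C = C"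
      by (simp add: transpose_eq_self_iff C_def mult_ac)
    show "0 \<le> x \<bullet> (C *v x)" for x
      unfolding form using u by (intro sum_nonneg) auto
    show "C$i$i = 1" for i
      using one by (simp add: C_def power2_eq_square mult.assoc)
  qed
  moreover have "U \<subseteq> null_space C"
  proof
    fix x assume "x \<in> U"
    then have "\<forall>g\<in>F. v g \<bullet> x = 0"
      using v by (auto simp: orthogonal_comp_def orthogonal_def inner_commute)
    then show "x \<in> null_space C"
      by (simp add: null_space_def C_def weighted_gram_matrix_mult)
  qed
  ultimately show ?thesis
    unfolding realizable_def by blast
qed

lemma realizable_if_constant_in_hull:
  fixes U :: "(real^'n) set"
  assumes y: "y \<in> convex hull (entrywise_square ` (orthogonal_comp U \<inter> sphere 0 1))"
    and const: "\<forall>i. y$i = t"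
  shows "realizable U"
proof -
  obtain F u where F: "finite F" "F \<subseteq> entrywise_square ` (orthogonal_comp U \<inter> sphere 0 1)"
    and u: "\<forall>g\<in>F. 0 \<le> u g" "sum u F = 1" and y_sum: "(\<Sum>g\<in>F. u g *\<^sub>R g) = y"
    using y unfolding convex_hull_explicit by blast
  then have "\<forall>g\<in>F. \<exists>w. w \<in> orthogonal_comp U \<inter> sphere 0 1 \<and> g = entrywise_square w"
    by blast
  then obtain v where v: "\<forall>g\<in>F. v g \<in> orthogonal_comp U \<inter> sphere 0 1 \<and> g = entrywise_square (v g)"
    by metis
  have g_nth: "g$i = (v g$i)^2" if "g \<in> F" for g i
  proof -
    have "g$i = entrywise_square (v g) $ i"
      using v that by (intro arg_cong[where f="\<lambda>w. w$i"]) blast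
    then show ?thesis by (simp add: entrywise_square_def)
  qed
  have y_nth: "y$i = (\<Sum>g\<in>F. u g * (v g$i)^2)" for i
  proof -
    have "y$i = (\<Sum>g\<in>F. u g * g$i)"
      using y_sum by auto
    also have "\<dots> = (\<Sum>g\<in>F. u g * (v g$i)^2)"
      by (rule sum.cong) (simp_all add: g_nth)
    finally show ?thesis .
  qed
  have "real CARD('n) * t = (\<Sum>i\<in>UNIV. y$i)"
    using const by simp
  also have "\<dots> = (\<Sum>g\<in>F. u g * (\<Sum>i\<in>UNIV. (v g$i)^2))"
    unfolding y_nth sum_distrib_left by (rule sum.swap)
  also have "\<dots> = 1"
    using v u(2) by (simp add: sum_power2_components)
  finally have t: "t > 0"
    by (smt (verit) mult_nonneg_nonpos of_nat_0_le_iff)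
  show ?thesis
  proof (rule realizable_if_weighted_squares_one[OF F(1), of v _ "\<lambda>g. u g / t"])
    show "\<forall>g\<in>F. v g \<in> orthogonal_comp U" "\<forall>g\<in>F. 0 \<le> u g / t"
      using v u t by auto
    show "\<forall>i. (\<Sum>g\<in>F. u g / t * (v g $ i)^2) = 1"
      using y_nth const t by (simp add: sum_divide_distrib[symmetric])
  qed
qed

lemma separating_functional_if_not_realizable:
  fixes U :: "(real^'n) set"
  assumes "\<not> realizable U"
  obtains a :: "real^'n" and b :: real
  where "b < 0" "0 \<le> (\<Sum>i\<in>UNIV. a$i)"
    "\<forall>w \<in> orthogonal_comp U \<inter> sphere 0 1. a \<bullet> entrywise_square w < b"
proof (cases "orthogonal_comp U \<inter> sphere 0 1 = {}")
  case True
  show ?thesis by (rule that[of "-1" 0]) (use True in auto)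
next
  case False
  define S where "S = convex hull (entrywise_square ` (orthogonal_comp U \<inter> sphere 0 1))"
  define T where "T = {x::real^'n. (\<forall>i j. x$i = x$j) \<and> (\<forall>i. 0 \<le> x$i)}"
  have "compact (entrywise_square ` (orthogonal_comp U \<inter> sphere 0 1))"
  proof (rule compact_continuous_image)
    show "continuous_on (orthogonal_comp U \<inter> sphere 0 1) entrywise_square"
      unfolding entrywise_square_def by (intro continuous_intros)
    show "compact (orthogonal_comp U \<inter> sphere 0 1)"
      by (intro closed_Int_compact closed_subspace subspace_orthogonal_comp compact_sphere)
  qed
  then have S: "compact S" "convex S" "S \<noteq> {}"
    using False by (auto simp: S_def compact_convex_hull)
  have "T = (\<Inter>i. \<Inter>j. {x. x$i = x$j}) \<inter> (\<Inter>i. {x. 0 \<le> x$i})"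
    unfolding T_def by blast
  then have "closed T"
    by (simp add: closed_Int closed_INT closed_Collect_eq closed_Collect_le continuous_on_component)
  have "convex T"
    unfolding T_def convex_def by (auto intro!: add_nonneg_nonneg mult_nonneg_nonneg) metis+
  have "S \<inter> T = {}"
  proof (rule ccontr)
    assume "S \<inter> T \<noteq> {}"
    then obtain y where "y \<in> S" "\<forall>i. y$i = y$(undefined::'n)"
      unfolding T_def by blast
    then have "realizable U"
      unfolding S_def by (rule realizable_if_constant_in_hull)
    with assms show False ..
  qed
  then obtain a b where sep: "\<forall>x\<in>S. a \<bullet> x < b" "\<forall>x\<in>T. b < a \<bullet> x"
    using separating_hyperplane_compact_closed[OF S(2,1,3) \<open>convex T\<close> \<open>closed T\<close>] by blast
  have ray: "(\<chi> i. s) \<in> T" if "0 \<le> s" for s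
    using that by (simp add: T_def)
  have inner_ray: "a \<bullet> (\<chi> i. s) = s * (\<Sum>i\<in>UNIV. a$i)" for s
    by (simp add: inner_vec_def sum_distrib_left mult.commute)
  have "b < a \<bullet> (\<chi> i. 0)"
    using sep(2) ray[of 0] by blast
  then have "b < 0"
    by (simp add: inner_ray)
  have "0 \<le> (\<Sum>i\<in>UNIV. a$i)"
  proof (rule ccontr)
    assume neg: "\<not> 0 \<le> (\<Sum>i\<in>UNIV. a$i)"
    \<comment> \<open>the functional then tends to \<open>-\<infinity>\<close> along the ray, so it cannot stay above \<open>b\<close>\<close>
    have "b < a \<bullet> (\<chi> i. b / (\<Sum>i\<in>UNIV. a$i))"
      using sep(2) ray neg \<open>b < 0\<close> by (simp add: divide_nonpos_neg)
    with neg show False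
      by (simp add: inner_ray)
  qed
  moreover have "\<forall>w \<in> orthogonal_comp U \<inter> sphere 0 1. a \<bullet> entrywise_square w < b"
    using sep(1) by (auto simp: S_def hull_inc)
  ultimately show ?thesis
    using that \<open>b < 0\<close> by blast
qed

lemma diagonal_certificate_if_separating:
  fixes W :: "(real^'n) set"
  assumes W: "subspace W" and "b < 0" "0 \<le> (\<Sum>i\<in>UNIV. a$i)"
    and sep: "\<forall>w \<in> W \<inter> sphere 0 1. a \<bullet> entrywise_square w < b"
  shows "\<exists>D::real^'n^'n. diagonal_matrix D \<and> trace D > 0 \<and> (\<forall>v\<in>W. v \<bullet> (D *v v) \<le> 0)"
proof (intro exI conjI)
  define D :: "real^'n^'n" where "D = (\<chi> i j. if i = j then a$i - b else 0)"
  show D: "diagonal_matrix D"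
    by (simp add: D_def diagonal_matrix_def)
  show "trace D > 0"
    using assms(2,3) by (simp add: trace_def D_def sum_subtractf)
      (smt (verit) of_nat_0_less_iff zero_less_card_finite mult_pos_neg)
  have form: "v \<bullet> (D *v v) = a \<bullet> entrywise_square v - b * (norm v)^2" for v
    unfolding diagonal_matrix_quadratic_form[OF D]
    by (simp add: D_def entrywise_square_def inner_vec_def
        sum_power2_components[symmetric] sum_distrib_left sum_subtractf left_diff_distrib)
  show "\<forall>v\<in>W. v \<bullet> (D *v v) \<le> 0"
  proof
    fix v assume "v \<in> W"
    show "v \<bullet> (D *v v) \<le> 0"
    proof (cases "v = 0")
      case False
      define w where "w = (1 / norm v) *\<^sub>R v"
      have "w \<in> W \<inter> sphere 0 1"
        using \<open>v \<in> W\<close> False W by (simp add: w_def subspace_scale)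
      moreover have "(norm v *\<^sub>R w) \<bullet> (D *v (norm v *\<^sub>R w))
          = (norm v)^2 * (a \<bullet> entrywise_square w - b)"
        using False by (simp add: form entrywise_square_scaleR w_def power_one_over algebra_simps)
      then have "v \<bullet> (D *v v) = (norm v)^2 * (a \<bullet> entrywise_square w - b)"
        using False by (simp add: w_def)
      ultimately show ?thesis
        using sep by (simp add: mult_nonneg_nonpos less_imp_le)
    qed simp
  qed
qed

theorem lemma3p2:
  fixes U :: "(real^'n) set"
  assumes "subspace U"
  shows "\<not> realizable U \<longleftrightarrow>
    (\<exists>D::real^'n^'n. diagonal_matrix D \<and> trace D > 0 \<and>
       (\<forall>v \<in> orthogonal_comp U. v \<bullet> (D *v v) \<le> 0))"
proof
  assume "\<not> realizable U"
  then obtain a :: "real^'n" and b where "b < 0" "0 \<le> (\<Sum>i\<in>UNIV. a$i)"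
    "\<forall>w \<in> orthogonal_comp U \<inter> sphere 0 1. a \<bullet> entrywise_square w < b"
    by (rule separating_functional_if_not_realizable)
  then show "\<exists>D::real^'n^'n. diagonal_matrix D \<and> trace D > 0 \<and>
      (\<forall>v \<in> orthogonal_comp U. v \<bullet> (D *v v) \<le> 0)"
    by (intro diagonal_certificate_if_separating subspace_orthogonal_comp)
qed (use not_realizable_if_diagonal_certificate in blast)

end
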